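(* Let $p,q\geq1$ be integers and let $(\vartheta(s),\alpha(s))$ be a trajectory of the differential system $$\dot\vartheta=3\sin\vartheta\cos\vartheta\sin(\alpha-\vartheta),\qquad \dot\alpha=q\cos\alpha\cos\vartheta-p\sin\alpha\sin\vartheta.$$ Suppose that for some $s_0$ one has $0<\vartheta(s_0)<\pi/2$ and $\vartheta(s_0)+\pi/2\leq\alpha(s_0)\leq\vartheta(s_0)+3\pi/2$, i.e. the trajectory is in $R_2=\{(\vartheta,\alpha):0\leq\vartheta\leq\pi/2,\ \vartheta+\pi/2\leq\alpha\leq\vartheta+3\pi/2\}$. Then the trajectory is in $R_2$ for all $s\leq s_0$. *)

theory Defs
  imports Complex_Main
begin

definition R2 :: "(real \<times> real) set" where
  "R2 = {(t, a). 0 \<le> t \<and> t \<le> pi/2 \<and> t + pi/2 \<le> a \<and> a \<le> t + 3*pi/2}"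

end

theory Submission
  imports Defs "HOL-Analysis.Analysis"
begin

text \<open>
  Backwards in time, the weight \<open>(sin \<theta> cos \<theta>)\<^sup>2 e\<^sup>-\<^sup>6\<^sup>s\<close> can only grow, since its logarithmic
  derivative is \<open>6 (cos 2\<theta> sin (\<alpha> - \<theta>) - 1) \<le> 0\<close>; so \<open>sin \<theta> cos \<theta>\<close> never vanishes and \<open>\<theta>\<close>
  stays in \<open>(0, \<pi>/2)\<close>. There, with \<open>K = p + q\<close>, the function \<open>cos (\<alpha> - \<theta>) e\<^sup>K\<^sup>s\<close> is
  nondecreasing wherever it is positive, so once it is \<open>\<le> 0\<close> it was \<open>\<le> 0\<close> before.
  By continuity \<open>\<alpha> - \<theta>\<close> then never reaches \<open>0\<close> or \<open>2\<pi>\<close>, which confines it to \<open>[\<pi>/2, 3\<pi>/2]\<close>.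
\<close>

lemma connected_subset_between_omitted:
  fixes S :: "real set"
  assumes "connected S" "c \<notin> S" "d \<notin> S" "x \<in> S" "c < x" "x < d"
  shows "S \<subseteq> {c<..<d}"
proof
  fix y assume "y \<in> S"
  show "y \<in> {c<..<d}"
  proof (rule ccontr)
    assume "y \<notin> {c<..<d}"
    then have "c \<in> S \<or> d \<in> S"
      using \<open>y \<in> S\<close> assms(1,4-6) unfolding connected_iff_interval
      by (metis greaterThanLessThan_iff linorder_not_le order_less_imp_le)
    with assms(2,3) show False by blast
  qed
qed

lemma cos_nonpos_between:
  assumes "0 < y" "y < 2 * pi" "cos y \<le> 0"
  shows "pi / 2 \<le> y \<and> y \<le> 3 * pi / 2"
proof (rule ccontr)
  assume outside: "\<not> ?thesis"
  have "cos y > 0"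
  proof (cases "y < pi / 2")
    case True
    then show ?thesis using assms(1) by (intro cos_gt_zero) auto
  next
    case False
    with outside have "3 * pi / 2 < y" by linarith
    then have "cos (y - 2 * pi) > 0" using assms(2) by (intro cos_gt_zero_pi) auto
    then show ?thesis by (simp add: cos_diff)
  qed
  with assms(3) show False by simp
qed

lemma nonpos_if_nondecreasing_where_pos:
  fixes V :: "real \<Rightarrow> real"
  assumes "a \<le> b" "continuous_on {a..b} V" "V b \<le> 0"
    and "\<And>x. a < x \<Longrightarrow> x < b \<Longrightarrow> 0 < V x \<Longrightarrow> \<exists>D. (V has_real_derivative D) (at x) \<and> 0 \<le> D"
  shows "V a \<le> 0"
proof (rule ccontr)
  assume "\<not> V a \<le> 0"
  define S where "S = {t \<in> {a..b}. V t \<le> 0}"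
  have "closed S"
    unfolding S_def by (rule continuous_on_closed_Collect_le) (auto intro: assms(2))
  moreover have "b \<in> S" "bdd_below S"
    using assms(1,3) by (auto simp: S_def bdd_below_def)
  ultimately have first: "Inf S \<in> S" and before_first: "\<And>t. t \<in> S \<Longrightarrow> Inf S \<le> t"
    using closed_contains_Inf cInf_lower by blast+
  have "a \<le> Inf S" "Inf S \<le> b" using first by (auto simp: S_def)
  \<comment> \<open>before the first zero \<open>V\<close> is positive, hence nondecreasing\<close>
  have "V a \<le> V (Inf S)"
  proof (rule DERIV_nonneg_imp_increasing_open[OF \<open>a \<le> Inf S\<close>])
    fix x assume "a < x" "x < Inf S"
    then have "0 < V x" using before_first[of x] \<open>Inf S \<le> b\<close> by (force simp: S_def)
    then show "\<exists>D. (V has_real_derivative D) (at x) \<and> 0 \<le> D"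
      using assms(4) \<open>a < x\<close> \<open>x < Inf S\<close> \<open>Inf S \<le> b\<close> by simp
  qed (use assms(2) \<open>Inf S \<le> b\<close> in \<open>auto intro: continuous_on_subset\<close>)
  with first \<open>\<not> V a \<le> 0\<close> show False by (simp add: S_def)
qed

lemma abs_cos_sq_sin_sq_combination_le:
  fixes a b :: real
  assumes "0 \<le> a" "0 \<le> b"
  shows "\<bar>b * (cos t)\<^sup>2 - a * (sin t)\<^sup>2\<bar> \<le> a + b"
proof -
  have "(cos t)\<^sup>2 \<le> 1" "(sin t)\<^sup>2 \<le> 1" by (simp_all add: abs_square_le_1)
  then have "b * (cos t)\<^sup>2 \<le> b" "a * (sin t)\<^sup>2 \<le> a"
    using assms by (simp_all add: mult_left_le)
  moreover have "0 \<le> b * (cos t)\<^sup>2" "0 \<le> a * (sin t)\<^sup>2" using assms by simp_all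
  ultimately show ?thesis unfolding abs_le_iff by linarith
qed

locale angle_system =
  fixes p q :: nat and \<theta> \<alpha> :: "real \<Rightarrow> real"
  assumes theta_deriv: "\<And>s. (\<theta> has_real_derivative
              (3 * sin (\<theta> s) * cos (\<theta> s) * sin (\<alpha> s - \<theta> s))) (at s)"
    and alpha_deriv: "\<And>s. (\<alpha> has_real_derivative
              (real q * cos (\<alpha> s) * cos (\<theta> s) - real p * sin (\<alpha> s) * sin (\<theta> s))) (at s)"
begin

lemma continuous_on_theta: "continuous_on S \<theta>"
  using theta_deriv DERIV_isCont continuous_at_imp_continuous_on by blast

lemma continuous_on_alpha: "continuous_on S \<alpha>"
  using alpha_deriv DERIV_isCont continuous_at_imp_continuous_on by blast

lemma theta_weight_antimono:
  assumes "s \<le> t"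
  shows "(sin (\<theta> t) * cos (\<theta> t))\<^sup>2 * exp (- 6 * t) \<le> (sin (\<theta> s) * cos (\<theta> s))\<^sup>2 * exp (- 6 * s)"
proof (rule DERIV_nonpos_imp_nonincreasing[OF assms])
  fix x
  let ?w = "(sin (\<theta> x) * cos (\<theta> x))\<^sup>2 * exp (- 6 * x)"
  let ?c = "(cos (\<theta> x))\<^sup>2 - (sin (\<theta> x))\<^sup>2"
  have deriv: "((\<lambda>s. (sin (\<theta> s) * cos (\<theta> s))\<^sup>2 * exp (- 6 * s)) has_real_derivative
                 6 * ?w * (?c * sin (\<alpha> x - \<theta> x) - 1)) (at x)"
    by (rule derivative_eq_intros theta_deriv refl)+ (simp add: algebra_simps power2_eq_square)
  have "\<bar>?c * sin (\<alpha> x - \<theta> x)\<bar> \<le> 1"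
    unfolding abs_mult cos_double[symmetric] by (intro mult_le_one) (auto simp: abs_sin_le_one)
  then have "6 * ?w * (?c * sin (\<alpha> x - \<theta> x) - 1) \<le> 0"
    by (intro mult_nonneg_nonpos) auto
  with deriv show "\<exists>D. ((\<lambda>s. (sin (\<theta> s) * cos (\<theta> s))\<^sup>2 * exp (- 6 * s)) has_real_derivative D) (at x) \<and> D \<le> 0"
    by blast
qed

lemma theta_in_open_quadrant:
  assumes "0 < \<theta> s0" "\<theta> s0 < pi / 2" "s \<le> s0"
  shows "0 < \<theta> s \<and> \<theta> s < pi / 2"
proof -
  have weight_pos: "0 < (sin (\<theta> t) * cos (\<theta> t))\<^sup>2 * exp (- 6 * t)" if "t \<le> s0" for t
  proof -
    have "0 < (sin (\<theta> s0) * cos (\<theta> s0))\<^sup>2 * exp (- 6 * s0)"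
      using assms(1,2) sin_gt_zero[of "\<theta> s0"] cos_gt_zero[of "\<theta> s0"] by simp
    then show ?thesis using theta_weight_antimono[OF that] by linarith
  qed
  have "\<theta> ` {s..s0} \<subseteq> {0<..<pi / 2}"
  proof (rule connected_subset_between_omitted)
    show "connected (\<theta> ` {s..s0})"
      by (intro connected_continuous_image continuous_on_theta connected_Icc)
    have "\<forall>t\<in>{s..s0}. \<theta> t \<noteq> 0 \<and> \<theta> t \<noteq> pi / 2"
    proof
      fix t assume "t \<in> {s..s0}"
      then have "sin (\<theta> t) \<noteq> 0" "cos (\<theta> t) \<noteq> 0" using weight_pos[of t] by auto
      then show "\<theta> t \<noteq> 0 \<and> \<theta> t \<noteq> pi / 2" by (metis sin_zero cos_pi_half)
    qed
    then show "0 \<notin> \<theta> ` {s..s0}" "pi / 2 \<notin> \<theta> ` {s..s0}"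
      unfolding image_iff by auto
  qed (use assms in auto)
  then have "\<theta> s \<in> {0<..<pi / 2}"
    by (rule subsetD) (use assms(3) in simp)
  then show ?thesis by simp
qed

lemma gap_rate_eq:
  "real q * cos (\<alpha> x) * cos (\<theta> x) - real p * sin (\<alpha> x) * sin (\<theta> x)
     - 3 * sin (\<theta> x) * cos (\<theta> x) * sin (\<alpha> x - \<theta> x)
   = cos (\<alpha> x - \<theta> x) * (real q * (cos (\<theta> x))\<^sup>2 - real p * (sin (\<theta> x))\<^sup>2)
     - (real p + real q + 3) * sin (\<theta> x) * cos (\<theta> x) * sin (\<alpha> x - \<theta> x)"
proof -
  have "(sin (\<theta> x))\<^sup>2 + (cos (\<theta> x))\<^sup>2 = 1" by simp
  then show ?thesis unfolding sin_diff cos_diff by algebra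
qed

lemma cos_gap_weight_has_nonneg_deriv:
  assumes "0 < \<theta> x" "\<theta> x < pi / 2" "0 < cos (\<alpha> x - \<theta> x)"
  shows "\<exists>D. ((\<lambda>s. cos (\<alpha> s - \<theta> s) * exp ((real p + real q) * s)) has_real_derivative D) (at x)
             \<and> 0 \<le> D"
proof -
  define K where "K = real p + real q"
  define M where "M = real q * (cos (\<theta> x))\<^sup>2 - real p * (sin (\<theta> x))\<^sup>2"
  let ?D = "exp (K * x) * (cos (\<alpha> x - \<theta> x) * (K - sin (\<alpha> x - \<theta> x) * M)
              + (K + 3) * (sin (\<theta> x) * cos (\<theta> x)) * (sin (\<alpha> x - \<theta> x))\<^sup>2)"
  have "((\<lambda>s. cos (\<alpha> s - \<theta> s) * exp (K * s)) has_real_derivative ?D) (at x)"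
    apply (rule derivative_eq_intros theta_deriv alpha_deriv refl)+
    apply (simp only: gap_rate_eq)
    apply (simp add: K_def M_def algebra_simps power2_eq_square)
    done
  moreover have "0 \<le> ?D"
  proof -
    have "\<bar>sin (\<alpha> x - \<theta> x) * M\<bar> \<le> 1 * K"
      unfolding abs_mult K_def M_def by (intro mult_mono abs_cos_sq_sin_sq_combination_le abs_sin_le_one) auto
    then have "0 \<le> cos (\<alpha> x - \<theta> x) * (K - sin (\<alpha> x - \<theta> x) * M)"
      using assms(3) by simp
    moreover have "0 \<le> sin (\<theta> x) * cos (\<theta> x)"
      using assms(1,2) sin_gt_zero[of "\<theta> x"] cos_gt_zero[of "\<theta> x"] by simp
    then have "0 \<le> (K + 3) * (sin (\<theta> x) * cos (\<theta> x)) * (sin (\<alpha> x - \<theta> x))\<^sup>2"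
      unfolding K_def by simp
    ultimately show ?thesis by simp
  qed
  ultimately show ?thesis unfolding K_def by blast
qed

lemma cos_gap_nonpos:
  assumes "0 < \<theta> s0" "\<theta> s0 < pi / 2" "cos (\<alpha> s0 - \<theta> s0) \<le> 0" "s \<le> s0"
  shows "cos (\<alpha> s - \<theta> s) \<le> 0"
proof -
  define K where "K = real p + real q"
  have "cos (\<alpha> s - \<theta> s) * exp (K * s) \<le> 0"
  proof (rule nonpos_if_nondecreasing_where_pos[OF \<open>s \<le> s0\<close>])
    show "continuous_on {s..s0} (\<lambda>s. cos (\<alpha> s - \<theta> s) * exp (K * s))"
      by (intro continuous_intros continuous_on_theta continuous_on_alpha)
    show "cos (\<alpha> s0 - \<theta> s0) * exp (K * s0) \<le> 0"
      using assms(3) by (simp add: mult_nonpos_nonneg)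
  next
    fix x assume "s < x" "x < s0" and pos: "0 < cos (\<alpha> x - \<theta> x) * exp (K * x)"
    show "\<exists>D. ((\<lambda>s. cos (\<alpha> s - \<theta> s) * exp (K * s)) has_real_derivative D) (at x) \<and> 0 \<le> D"
      unfolding K_def using pos theta_in_open_quadrant[OF assms(1,2), of x] \<open>x < s0\<close>
      by (intro cos_gap_weight_has_nonneg_deriv) (auto simp: zero_less_mult_iff)
  qed
  then show ?thesis by (simp add: mult_le_0_iff)
qed

lemma gap_in_band:
  assumes "0 < \<theta> s0" "\<theta> s0 < pi / 2"
    and "pi / 2 \<le> \<alpha> s0 - \<theta> s0" "\<alpha> s0 - \<theta> s0 \<le> 3 * pi / 2" "s \<le> s0"
  shows "pi / 2 \<le> \<alpha> s - \<theta> s \<and> \<alpha> s - \<theta> s \<le> 3 * pi / 2"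
proof -
  let ?gap = "\<lambda>t. \<alpha> t - \<theta> t"
  have "cos (?gap s0) \<le> 0"
    using assms(3,4) cos_ge_zero[of "?gap s0 - pi"] by (simp add: cos_diff)
  then have cos_nonpos: "cos (?gap t) \<le> 0" if "t \<le> s0" for t
    using cos_gap_nonpos[OF assms(1,2)] that by blast
  have "?gap ` {s..s0} \<subseteq> {0<..<2 * pi}"
  proof (rule connected_subset_between_omitted)
    show "connected (?gap ` {s..s0})"
      by (intro connected_continuous_image continuous_intros continuous_on_theta continuous_on_alpha
          connected_Icc)
    have "\<forall>t\<in>{s..s0}. ?gap t \<noteq> 0 \<and> ?gap t \<noteq> 2 * pi"
      using cos_nonpos by fastforce
    then show "0 \<notin> ?gap ` {s..s0}" "2 * pi \<notin> ?gap ` {s..s0}"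
      unfolding image_iff by auto
    show "?gap s0 \<in> ?gap ` {s..s0}" using assms(5) by simp
    show "0 < ?gap s0" "?gap s0 < 2 * pi" using assms(3,4) pi_gt_zero by linarith+
  qed
  then have "?gap s \<in> {0<..<2 * pi}"
    by (rule subsetD) (use assms(5) in simp)
  then show ?thesis
    using cos_nonpos[OF assms(5)] by (intro cos_nonpos_between) auto
qed

end

theorem lemma4p8:
  fixes p q :: nat and \<theta> \<alpha> :: "real \<Rightarrow> real" and s0 :: real
  assumes "p \<ge> 1" and "q \<ge> 1"
    and "\<And>s. (\<theta> has_real_derivative
              (3 * sin (\<theta> s) * cos (\<theta> s) * sin (\<alpha> s - \<theta> s))) (at s)"
    and "\<And>s. (\<alpha> has_real_derivative
              (real q * cos (\<alpha> s) * cos (\<theta> s) - real p * sin (\<alpha> s) * sin (\<theta> s))) (at s)"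
    and "0 < \<theta> s0" and "\<theta> s0 < pi/2"
    and "\<theta> s0 + pi/2 \<le> \<alpha> s0" and "\<alpha> s0 \<le> \<theta> s0 + 3*pi/2"
  shows "\<forall>s\<le>s0. (\<theta> s, \<alpha> s) \<in> R2"
proof (intro allI impI)
  interpret angle_system p q \<theta> \<alpha> using assms(3,4) by unfold_locales
  fix s assume "s \<le> s0"
  have "pi / 2 \<le> \<alpha> s - \<theta> s \<and> \<alpha> s - \<theta> s \<le> 3 * pi / 2"
    using assms(7,8) by (intro gap_in_band[OF assms(5,6) _ _ \<open>s \<le> s0\<close>]) auto
  with theta_in_open_quadrant[OF assms(5,6) \<open>s \<le> s0\<close>] show "(\<theta> s, \<alpha> s) \<in> R2"
    by (simp add: R2_def)
qed

end
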